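(* Consider the random directed graph $\mathcal{G}_{n,1/2}$ on $n$ vertices (each ordered pair of distinct vertices is an edge independently with probability $\frac12$, so all such directed graphs are equally likely), with an arbitrary partition $(V_1,V_P)$ of the vertices into player-1 and probabilistic vertices and an arbitrary nonempty target (B\"uchi) set $B$. For all sufficiently large $n$, the probability that the classical algorithm for almost-sure winning in MDPs with B\"uchi objective $B$ takes more than one iteration is less than $\left(\frac34\right)^n$.
   Context: For $U \subseteq V$ in a graph $G$ with vertex partition $(V_1,V_P)$, the random attractor $\mathrm{Attr}_P(U)$ is $\bigcup_{i\ge 0} X_i$, where $X_0=U$ and $X_{i+1}= X_i \cup \{v\in V_P : E(v)\cap X_i \neq\emptyset\} \cup \{v \in V_1 : E(v)\subseteq X_i\}$, with $E(v)$ the set of out-neighbours of $v$. The classical algorithm for B\"uchi objective $B$ works in iterations: starting from $G^1=G$ with vertex set $V^1$, in iteration $i$ it computes the set $Z^i$ of vertices of $G^i$ with a directed path in $G^i$ to a vertex of $B\cap V^i$, sets $U^i=V^i\setminus Z^i$; if $U^i=\emptyset$ it stops and outputs $Z^i$, otherwise it removes $\mathrm{Attr}_P(U^i)$ (computed in $G^i$) from $G^i$ to get $G^{i+1}$ and continues. *)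

theory Defs
  imports Complex_Main
begin

text \<open>A subgraph G^i is represented by its
  vertex set S; its edges are those of E with both endpoints in S.\<close>

definition digraphs :: "nat \<Rightarrow> (nat \<times> nat) set set" where
  "digraphs n = Pow {(u, v). u < n \<and> v < n \<and> u \<noteq> v}"

definition sub_edges :: "(nat \<times> nat) set \<Rightarrow> nat set \<Rightarrow> (nat \<times> nat) set" where
  "sub_edges E S = E \<inter> (S \<times> S)"

definition reach_set :: "(nat \<times> nat) set \<Rightarrow> nat set \<Rightarrow> nat set \<Rightarrow> nat set" where
  "reach_set E S B = {v \<in> S. \<exists>b \<in> B \<inter> S. (v, b) \<in> (sub_edges E S)\<^sup>*}"

text \<open>One step of the random attractor computation in the subgraph on S,
  with V1 the player-1 vertices and S - V1 the probabilistic vertices.\<close>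
definition attr_step :: "(nat \<times> nat) set \<Rightarrow> nat set \<Rightarrow> nat set \<Rightarrow> nat set \<Rightarrow> nat set" where
  "attr_step E V1 S X = X
     \<union> {v \<in> S - V1. \<exists>w. (v, w) \<in> sub_edges E S \<and> w \<in> X}
     \<union> {v \<in> S \<inter> V1. \<forall>w. (v, w) \<in> sub_edges E S \<longrightarrow> w \<in> X}"

definition attrP :: "(nat \<times> nat) set \<Rightarrow> nat set \<Rightarrow> nat set \<Rightarrow> nat set \<Rightarrow> nat set" where
  "attrP E V1 S U = (\<Union>i. (attr_step E V1 S ^^ i) U)"

text \<open>Vertex set of G^(i+1) (index shifted by one); once U^i is empty the
  algorithm has stopped and the set stays fixed.\<close>
fun buchi_vs :: "(nat \<times> nat) set \<Rightarrow> nat set \<Rightarrow> nat set \<Rightarrow> nat set \<Rightarrow> nat \<Rightarrow> nat set" where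
  "buchi_vs E V1 B V 0 = V"
| "buchi_vs E V1 B V (Suc i) =
     (let S = buchi_vs E V1 B V i; U = S - reach_set E S B in
      if U = {} then S else S - attrP E V1 S U)"

definition buchi_U :: "(nat \<times> nat) set \<Rightarrow> nat set \<Rightarrow> nat set \<Rightarrow> nat set \<Rightarrow> nat \<Rightarrow> nat set" where
  "buchi_U E V1 B V i = (let S = buchi_vs E V1 B V i in S - reach_set E S B)"

definition num_iterations :: "(nat \<times> nat) set \<Rightarrow> nat set \<Rightarrow> nat set \<Rightarrow> nat set \<Rightarrow> nat" where
  "num_iterations E V1 B V = Suc (LEAST i. buchi_U E V1 B V i = {})"

end

theory Submission
  imports Defs "HOL-Real_Asymp.Real_Asymp"
begin

text \<open>If the algorithm needs a second iteration, some vertex cannot reach the target set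
  \<open>B\<close>, and the vertices that cannot reach \<open>B\<close> form a nonempty proper subset \<open>R\<close> with no
  edge leaving it. For a fixed \<open>R\<close> with \<open>|R| = k\<close> this forbids \<open>k (n - k)\<close> edges, which
  happens with probability \<open>2^-k(n-k)\<close>. By the union bound the failure probability is at most
  the sum over \<open>0 < k < n\<close> of \<open>C(n,k) 2^-k(n-k)\<close>; the terms \<open>k = 1, n - 1\<close> are \<open>2n 2^-n\<close>,
  all others are at most \<open>2^n 2^-(2n-4)\<close>, so the sum is at most \<open>16 n\<^sup>2 2^-n\<close>, which is
  eventually below \<open>(3/4)^n\<close>.\<close>

definition offdiag :: "'a set \<Rightarrow> ('a \<times> 'a) set" where
  "offdiag V = {(u, v) \<in> V \<times> V. u \<noteq> v}"

text \<open>A digraph is reducible iff it is not strongly connected.\<close>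
definition reducible_digraphs :: "'a set \<Rightarrow> ('a \<times> 'a) set set" where
  "reducible_digraphs V =
     {E \<in> Pow (offdiag V). \<exists>R. R \<noteq> {} \<and> R \<subset> V \<and> E \<inter> R \<times> (V - R) = {}}"

lemma digraphs_eq_Pow_offdiag: "digraphs n = Pow (offdiag {0..<n})"
  by (auto simp: digraphs_def offdiag_def)

lemma finite_offdiag: "finite V \<Longrightarrow> finite (offdiag V)"
  unfolding offdiag_def by (rule finite_subset[of _ "V \<times> V"]) auto

lemma card_cut:
  assumes "R \<subseteq> V" "finite V"
  shows "card (R \<times> (V - R)) = card R * (card V - card R)"
  using assms by (simp add: card_cartesian_product card_Diff_subset finite_subset)

lemma closed_subset_if_iterations_gt_1:
  assumes E: "E \<subseteq> V \<times> V" and B: "B \<subseteq> V" "B \<noteq> {}"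
    and it: "num_iterations E V1 B V > 1"
  shows "\<exists>R. R \<noteq> {} \<and> R \<subset> V \<and> E \<inter> R \<times> (V - R) = {}"
proof -
  have sub: "sub_edges E V = E" using E by (auto simp: sub_edges_def)
  have "buchi_U E V1 B V 0 \<noteq> {}"
  proof
    assume "buchi_U E V1 B V 0 = {}"
    then have "(LEAST i. buchi_U E V1 B V i = {}) = 0" by (rule Least_eq_0)
    with it show False by (simp add: num_iterations_def)
  qed
  then obtain v where "v \<in> V" "v \<notin> reach_set E V B"
    by (auto simp: buchi_U_def)
  define R where "R = {x \<in> V. \<forall>b \<in> B. (x, b) \<notin> E\<^sup>*}"
  have "v \<in> R" using \<open>v \<in> V\<close> \<open>v \<notin> reach_set E V B\<close> B(1) sub
    by (auto simp: R_def reach_set_def)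
  moreover obtain b where "b \<in> B" using B(2) by blast
  then have "b \<in> V - R" using B(1) by (auto simp: R_def)
  moreover have "E \<inter> R \<times> (V - R) = {}"
    by (auto simp: R_def intro: converse_rtrancl_into_rtrancl)
  ultimately show ?thesis by (intro exI[of _ R]) (auto simp: R_def)
qed

lemma card_Pow_avoiding:
  assumes "finite D" "X \<subseteq> D"
  shows "real (card {E \<in> Pow D. E \<inter> X = {}}) = 2 ^ card D * (1/2) ^ card X"
proof -
  have "{E \<in> Pow D. E \<inter> X = {}} = Pow (D - X)" by auto
  then have "card {E \<in> Pow D. E \<inter> X = {}} = 2 ^ (card D - card X)"
    using assms by (simp add: card_Pow card_Diff_subset finite_subset)
  moreover have "card X \<le> card D" using assms by (rule card_mono)
  then have "(2::real) ^ (card D - card X) = 2 ^ card D * (1/2) ^ card X"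
    by (simp add: power_diff power_one_over)
  ultimately show ?thesis by (metis of_nat_numeral of_nat_power)
qed

lemma sum_proper_subsets_by_card:
  assumes "finite V"
  shows "(\<Sum>R\<in>{R. R \<noteq> {} \<and> R \<subset> V}. g (card R)) = (\<Sum>k\<in>{0<..<card V}. of_nat (card V choose k) * g k)"
proof -
  let ?P = "{R. R \<noteq> {} \<and> R \<subset> V}"
  have finP: "finite ?P" using assms by (auto intro: finite_subset[of _ "Pow V"])
  have card_range: "card R \<in> {0<..<card V}" if "R \<in> ?P" for R
    using that assms by (auto simp: finite_subset psubset_card_mono)
  have "(\<Sum>R\<in>?P. g (card R)) = (\<Sum>k\<in>{0<..<card V}. \<Sum>R\<in>{R \<in> ?P. card R = k}. g (card R))"
    using finP card_range by (intro sum.group[symmetric]) blast+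
  also have "\<dots> = (\<Sum>k\<in>{0<..<card V}. of_nat (card V choose k) * g k)"
  proof (rule sum.cong[OF refl])
    fix k assume "k \<in> {0<..<card V}"
    then have "{R \<in> ?P. card R = k} = {R. R \<subseteq> V \<and> card R = k}" by auto
    then show "(\<Sum>R\<in>{R \<in> ?P. card R = k}. g (card R)) = of_nat (card V choose k) * g k"
      using n_subsets[OF assms, of k] by simp
  qed
  finally show ?thesis .
qed

lemma fraction_reducible_digraphs_le:
  assumes "finite V"
  shows "real (card (reducible_digraphs V)) / real (card (Pow (offdiag V)))
         \<le> (\<Sum>k\<in>{0<..<card V}. real (card V choose k) * (1/2) ^ (k * (card V - k)))"
proof -
  let ?P = "{R. R \<noteq> {} \<and> R \<subset> V}"
  let ?D = "offdiag V"
  let ?avoid = "\<lambda>R. {E \<in> Pow ?D. E \<inter> R \<times> (V - R) = {}}"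
  have finD: "finite ?D" using assms by (rule finite_offdiag)
  have finP: "finite ?P" using assms by (auto intro: finite_subset[of _ "Pow V"])
  have card_avoid: "real (card (?avoid R)) = 2 ^ card ?D * (1/2) ^ (card R * (card V - card R))"
    if "R \<in> ?P" for R
  proof -
    have "R \<subseteq> V" using that by blast
    then have "R \<times> (V - R) \<subseteq> ?D" by (auto simp: offdiag_def)
    then show ?thesis
      using card_Pow_avoiding[OF finD] card_cut[OF \<open>R \<subseteq> V\<close> assms] by simp
  qed
  have "card (reducible_digraphs V) \<le> card (\<Union>R\<in>?P. ?avoid R)"
    using finD by (intro card_mono finite_UN_I finP) (auto simp: reducible_digraphs_def)
  also have "\<dots> \<le> (\<Sum>R\<in>?P. card (?avoid R))"
    by (rule card_UN_le[OF finP])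
  finally have "real (card (reducible_digraphs V)) \<le> real (\<Sum>R\<in>?P. card (?avoid R))"
    by (rule of_nat_mono)
  also have "\<dots> = 2 ^ card ?D * (\<Sum>R\<in>?P. (1/2) ^ (card R * (card V - card R)))"
    unfolding of_nat_sum sum_distrib_left by (rule sum.cong[OF refl card_avoid])
  also have "\<dots> = real (card (Pow ?D))
                  * (\<Sum>k\<in>{0<..<card V}. real (card V choose k) * (1/2) ^ (k * (card V - k)))"
    using sum_proper_subsets_by_card[OF assms, of "\<lambda>k. (1/2::real) ^ (k * (card V - k))"] finD
    by (simp add: card_Pow)
  moreover have "card (Pow ?D) > 0" using finD by (simp add: card_Pow)
  ultimately show ?thesis by (simp add: pos_divide_le_eq mult.commute)
qed

lemma cut_size_ge:
  fixes k n :: nat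
  assumes "2 \<le> k" "k + 2 \<le> n"
  shows "2 * n - 4 \<le> k * (n - k)"
proof -
  define a b where "a = k - 2" and "b = n - k - 2"
  then have "k = a + 2" "n = a + b + 4" using assms by simp_all
  then show ?thesis by (simp add: algebra_simps)
qed

lemma binomial_mult_half_pow_le:
  assumes "0 < k" "k < n"
  shows "real (n choose k) * (1/2) ^ (k * (n - k)) \<le> 16 * real n * (1/2) ^ n"
proof -
  consider "k = 1" | "k = n - 1" | "2 \<le> k" "k + 2 \<le> n" using assms by linarith
  then show ?thesis
  proof cases
    case 1
    then show ?thesis using assms by (cases n) auto
  next
    case 2
    then have "n choose k = n" using binomial_symmetric[of k n] assms by simp
    then show ?thesis using assms 2 by (cases n) auto
  next
    case 3
    have "real (n choose k) * (1/2) ^ (k * (n - k)) \<le> 2 ^ n * (1/2) ^ (2 * n - 4)"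
      using binomial_le_pow2[of n k] cut_size_ge[OF 3]
      by (intro mult_mono power_decreasing) (auto simp flip: of_nat_le_iff)
    also have "\<dots> = 16 * (1/2) ^ n"
    proof -
      obtain m where "n = m + 4" using le_Suc_ex[of 4 n] 3 by (auto simp: add.commute)
      then show ?thesis by (simp add: power_add power_one_over field_simps power_mult power2_eq_square)
    qed
    also have "\<dots> \<le> 16 * real n * (1/2) ^ n" using assms by simp
    finally show ?thesis .
  qed
qed

lemma sum_binomial_mult_half_pow_le:
  "(\<Sum>k\<in>{0<..<n}. real (n choose k) * (1/2) ^ (k * (n - k))) \<le> 16 * real n ^ 2 * (1/2) ^ n"
proof -
  have "(\<Sum>k\<in>{0<..<n}. real (n choose k) * (1/2) ^ (k * (n - k)))
        \<le> (\<Sum>k\<in>{0<..<n}. 16 * real n * (1/2) ^ n)"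
    by (intro sum_mono binomial_mult_half_pow_le) auto
  also have "\<dots> = real (n - 1) * (16 * real n * (1/2) ^ n)" by simp
  also have "\<dots> \<le> real n * (16 * real n * (1/2) ^ n)" by (intro mult_right_mono) auto
  finally show ?thesis by (simp add: power2_eq_square mult_ac)
qed

lemma iterations_gt_1_subset_reducible:
  assumes "B \<subseteq> {0..<n}" "B \<noteq> {}"
  shows "{E \<in> digraphs n. num_iterations E V1 B {0..<n} > 1} \<subseteq> reducible_digraphs {0..<n}"
proof
  fix E assume "E \<in> {E \<in> digraphs n. num_iterations E V1 B {0..<n} > 1}"
  then have "E \<subseteq> offdiag {0..<n}" "num_iterations E V1 B {0..<n} > 1"
    by (auto simp: digraphs_eq_Pow_offdiag)
  moreover have "offdiag {0..<n} \<subseteq> {0..<n} \<times> {0..<n}" by (auto simp: offdiag_def)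
  ultimately show "E \<in> reducible_digraphs {0..<n}"
    using closed_subset_if_iterations_gt_1[of E "{0..<n}" B V1] assms
    by (auto simp: reducible_digraphs_def)
qed

lemma fraction_iterations_gt_1_le:
  assumes "B \<subseteq> {0..<n}" "B \<noteq> {}"
  shows "real (card {E \<in> digraphs n. num_iterations E V1 B {0..<n} > 1}) / real (card (digraphs n))
         \<le> 16 * real n ^ 2 * (1/2) ^ n"
proof -
  have "finite (reducible_digraphs {0..<n})"
    by (rule rev_finite_subset[of "Pow (offdiag {0..<n})"])
      (auto simp: reducible_digraphs_def intro: finite_offdiag)
  then have "card {E \<in> digraphs n. num_iterations E V1 B {0..<n} > 1}
             \<le> card (reducible_digraphs {0..<n})"
    using iterations_gt_1_subset_reducible[OF assms] by (rule card_mono)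
  then have "real (card {E \<in> digraphs n. num_iterations E V1 B {0..<n} > 1}) / real (card (digraphs n))
             \<le> real (card (reducible_digraphs {0..<n})) / real (card (Pow (offdiag {0..<n})))"
    by (simp add: digraphs_eq_Pow_offdiag divide_right_mono)
  also have "\<dots> \<le> (\<Sum>k\<in>{0<..<n}. real (n choose k) * (1/2) ^ (k * (n - k)))"
    using fraction_reducible_digraphs_le[of "{0..<n}"] by simp
  also have "\<dots> \<le> 16 * real n ^ 2 * (1/2) ^ n"
    by (rule sum_binomial_mult_half_pow_le)
  finally show ?thesis .
qed

theorem theorem3:
  shows "\<exists>N. \<forall>n \<ge> N. \<forall>V1 B. V1 \<subseteq> {0..<n} \<and> B \<subseteq> {0..<n} \<and> B \<noteq> {} \<longrightarrow>
    real (card {E \<in> digraphs n. num_iterations E V1 B {0..<n} > 1})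
      / real (card (digraphs n)) < (3/4) ^ n"
proof -
  have "eventually (\<lambda>n::nat. 16 * real n ^ 2 * (1/2) ^ n < (3/4) ^ n) at_top"
    by real_asymp
  then obtain N where "\<And>n. n \<ge> N \<Longrightarrow> 16 * real n ^ 2 * (1/2) ^ n < (3/4) ^ n"
    unfolding eventually_at_top_linorder by blast
  then show ?thesis
    using fraction_iterations_gt_1_le by (meson order.strict_trans1)
qed

end
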